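(* Let $H$ be a definite Hamiltonian on $(a,b)$ in the limit circle case, let $c>0$, $r_0:=\bigl(\frac{c}{\det\Omega(a,b)}\bigr)^{\frac12}$, and let $(\hat t,\hat s)$ be the unique compatible pair for $H,r_0$ with constants $c,c$. Let $r>r_0$, and assume that we have points $s_0,\ldots,s_k$ such that $a \le s_0 < s_1 < \cdots < s_k \le b$ and \[ \det\Omega(s_{j-1},s_j) \ge \frac{c}{r^2}, \qquad j\in\{1,\ldots,k\}. \] Then \[ \int_{s_1}^{s_k} \frac{h_1(t)}{\omega_{1}(\hat s(t;r),t)}\,\mathrm{d}t \ge k\log 2 - \Bigl[\log r+\log\frac{\operatorname{tr}\Omega(s_0,s_k)}{\sqrt c}\Bigr]. \]
   Context: Let $-\infty<a<b\le\infty$. A Hamiltonian on $(a,b)$ is a measurable $H:(a,b)\to\mathbb{R}^{2\times 2}$, locally integrable on $(a,c)$ for $c<b$, with $H(t)\ge0$ a.e. and $\{H=0\}$ null; $H=\begin{pmatrix}h_1&h_3\\ h_3&h_2\end{pmatrix}$. It is in the limit circle case if $\int_a^b\operatorname{tr}H<\infty$, and definite if there is no $\phi$ with $H(t)=\operatorname{tr}H(t)\,\xi_\phi\xi_\phi^T$ a.e. on $(a,b)$, $\xi_\phi=(\cos\phi,\sin\phi)^T$. Set $\Omega(s,t)=\int_s^tH(u)\,\mathrm{d}u$, $\omega_1(s,t)=\int_s^th_1$. The unique compatible pair $(\hat t,\hat s)$ for $H,r_0$ with constants $c,c$ is given by $\det\Omega(a,\hat t(r))=\frac{c}{r^2}$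 for $r>r_0$ and, for $t\ge\hat t(r)$, $\hat s(t;r)\le t$ with $\det\Omega(\hat s(t;r),t)=\frac{c}{r^2}$. *)

theory Defs
  imports "HOL-Analysis.Analysis"
begin

text \<open>A Hamiltonian is given by its entries: H = [[h1, h3], [h3, h2]].
  Endpoints of intervals are extended reals (b may be +infinity).\<close>

definition eivl :: "ereal \<Rightarrow> ereal \<Rightarrow> real set" where
  "eivl s t = {u. s < ereal u \<and> ereal u < t}"

definition Om :: "(real \<Rightarrow> real) \<Rightarrow> ereal \<Rightarrow> ereal \<Rightarrow> real" where
  "Om h s t = (LINT u:eivl s t|lborel. h u)"

definition detOm :: "(real \<Rightarrow> real) \<Rightarrow> (real \<Rightarrow> real) \<Rightarrow> (real \<Rightarrow> real) \<Rightarrow> ereal \<Rightarrow> ereal \<Rightarrow> real" where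
  "detOm h1 h2 h3 s t = Om h1 s t * Om h2 s t - (Om h3 s t)^2"

definition trOm :: "(real \<Rightarrow> real) \<Rightarrow> (real \<Rightarrow> real) \<Rightarrow> ereal \<Rightarrow> ereal \<Rightarrow> real" where
  "trOm h1 h2 s t = Om h1 s t + Om h2 s t"

definition hamiltonian :: "real \<Rightarrow> ereal \<Rightarrow> (real \<Rightarrow> real) \<Rightarrow> (real \<Rightarrow> real) \<Rightarrow> (real \<Rightarrow> real) \<Rightarrow> bool" where
  "hamiltonian a b h1 h2 h3 \<longleftrightarrow>
     ereal a < b \<and>
     (\<forall>h\<in>{h1, h2, h3}. set_borel_measurable lborel (eivl (ereal a) b) h \<and>
        (\<forall>c::real. ereal c < b \<longrightarrow> set_integrable lborel (eivl (ereal a) (ereal c)) h)) \<and>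
     (AE t in lborel. t \<in> eivl (ereal a) b \<longrightarrow>
        (\<forall>x y::real. 0 \<le> h1 t * x^2 + 2 * h3 t * x * y + h2 t * y^2)) \<and>
     {t \<in> eivl (ereal a) b. h1 t = 0 \<and> h2 t = 0 \<and> h3 t = 0} \<in> null_sets lborel"

definition limit_circle :: "real \<Rightarrow> ereal \<Rightarrow> (real \<Rightarrow> real) \<Rightarrow> (real \<Rightarrow> real) \<Rightarrow> bool" where
  "limit_circle a b h1 h2 \<longleftrightarrow>
     (\<integral>\<^sup>+ t \<in> eivl (ereal a) b. ennreal (h1 t + h2 t) \<partial>lborel) < \<infinity>"

definition definite :: "real \<Rightarrow> ereal \<Rightarrow> (real \<Rightarrow> real) \<Rightarrow> (real \<Rightarrow> real) \<Rightarrow> (real \<Rightarrow> real) \<Rightarrow> bool" where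
  "definite a b h1 h2 h3 \<longleftrightarrow>
     \<not> (\<exists>\<phi>::real. AE t in lborel. t \<in> eivl (ereal a) b \<longrightarrow>
          h1 t = (h1 t + h2 t) * (cos \<phi>)^2 \<and>
          h3 t = (h1 t + h2 t) * cos \<phi> * sin \<phi> \<and>
          h2 t = (h1 t + h2 t) * (sin \<phi>)^2)"

text \<open>Compatible pair (that, shat) for H, r0 with constants c1, c2;
  shat t r stands for the paper's hat s(t;r).\<close>
definition compatible_pair :: "real \<Rightarrow> ereal \<Rightarrow> (real \<Rightarrow> real) \<Rightarrow> (real \<Rightarrow> real) \<Rightarrow> (real \<Rightarrow> real)
    \<Rightarrow> real \<Rightarrow> real \<Rightarrow> real \<Rightarrow> (real \<Rightarrow> real) \<Rightarrow> (real \<Rightarrow> real \<Rightarrow> real) \<Rightarrow> bool" where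
  "compatible_pair a b h1 h2 h3 r0 c1 c2 that shat \<longleftrightarrow>
     (\<forall>r>r0. a < that r \<and> ereal (that r) < b \<and>
        detOm h1 h2 h3 (ereal a) (ereal (that r)) = c1 / r^2) \<and>
     (\<forall>r>r0. \<forall>t. that r \<le> t \<and> ereal t < b \<longrightarrow>
        a \<le> shat t r \<and> shat t r \<le> t \<and>
        detOm h1 h2 h3 (ereal (shat t r)) (ereal t) = c2 / r^2)"

end

theory Submission
  imports Defs
begin

text \<open>
  Put d = c/r^2 and A_j = omega_1(s_(j-1), s_j). For a positive semidefinite H whose zero set is
  null, det Omega is superadditive on adjacent intervals, strictly so as soon as one of them has
  positive determinant. Since det Omega(s_(j-1), s_j) >= d = det Omega(shat(t;r), t), this forces
  s_(j-1) <= shat(t;r) for t in (s_j, s_(j+1)), so there the integrand dominates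
  h_1(t) / omega_1(s_(j-1), t). The integral of this logarithmic derivative over (s_j, s_(j+1)) is
  at least log((A_j + A_(j+1)) / A_j); since omega_1 is merely absolutely continuous, this is shown
  by cutting the range of omega_1(s_(j-1), .) geometrically into n pieces and letting n tend to
  infinity. By AM-GM,
  log((A_j + A_(j+1)) / A_j) >= log 2 + (log A_(j+1) - log A_j) / 2, which telescopes, and a second
  AM-GM, using A_k omega_2(s_(k-1), s_k) >= d and A_1 + omega_2(s_(k-1), s_k) <= tr Omega(s_0, s_k),
  bounds the remaining term (log A_1 - log A_k) / 2.
\<close>

section \<open>Positive semidefinite 2x2 matrices\<close>

text \<open>The matrix of \<open>psd2 p1 p2 p3\<close> is \<open>[[p1, p3], [p3, p2]]\<close>, following the order h1 h2 h3 of
  the Hamiltonian.\<close>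

definition psd2 :: "real \<Rightarrow> real \<Rightarrow> real \<Rightarrow> bool" where
  "psd2 p1 p2 p3 \<longleftrightarrow> 0 \<le> p1 \<and> 0 \<le> p2 \<and> p3\<^sup>2 \<le> p1 * p2"

lemma psd2_iff_quadratic_form_nonneg:
  "psd2 p1 p2 p3 \<longleftrightarrow> (\<forall>x y. 0 \<le> p1 * x\<^sup>2 + 2 * p3 * x * y + p2 * y\<^sup>2)"
proof
  assume psd: "psd2 p1 p2 p3"
  show "\<forall>x y. 0 \<le> p1 * x\<^sup>2 + 2 * p3 * x * y + p2 * y\<^sup>2"
  proof (intro allI)
    fix x y :: real
    show "0 \<le> p1 * x\<^sup>2 + 2 * p3 * x * y + p2 * y\<^sup>2"
    proof (cases "p1 = 0")
      case True
      then show ?thesis using psd by (simp add: psd2_def)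
    next
      case False
      then have "0 < p1" using psd by (simp add: psd2_def)
      moreover have "p1 * (p1 * x\<^sup>2 + 2 * p3 * x * y + p2 * y\<^sup>2) = (p1 * x + p3 * y)\<^sup>2 + (p1 * p2 - p3\<^sup>2) * y\<^sup>2"
        by (simp add: power2_eq_square algebra_simps)
      moreover have "0 \<le> (p1 * x + p3 * y)\<^sup>2 + (p1 * p2 - p3\<^sup>2) * y\<^sup>2"
        using psd by (simp add: psd2_def)
      ultimately have "0 \<le> p1 * (p1 * x\<^sup>2 + 2 * p3 * x * y + p2 * y\<^sup>2)"
        by simp
      then show ?thesis using \<open>0 < p1\<close> by (simp add: zero_le_mult_iff)
    qed
  qed
next
  assume form: "\<forall>x y. 0 \<le> p1 * x\<^sup>2 + 2 * p3 * x * y + p2 * y\<^sup>2"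
  have p1: "0 \<le> p1" and p2: "0 \<le> p2" using form[rule_format, of 1 0] form[rule_format, of 0 1] by simp_all
  have "p3\<^sup>2 \<le> p1 * p2"
  proof (cases "p1 = 0")
    case True
    \<comment> \<open>the form is affine in x; unless p3 = 0, this x makes it equal to -1\<close>
    have "0 \<le> p1 * (- (p2 + 1) / (2 * p3))\<^sup>2 + 2 * p3 * (- (p2 + 1) / (2 * p3)) * 1 + p2 * 1\<^sup>2"
      using form by blast
    then show ?thesis using True by (cases "p3 = 0") (simp_all add: field_simps)
  next
    case False
    have "0 \<le> p1 * (- p3)\<^sup>2 + 2 * p3 * (- p3) * p1 + p2 * p1\<^sup>2"
      using form by blast
    also have "\<dots> = p1 * (p1 * p2 - p3\<^sup>2)"
      by (simp add: power2_eq_square algebra_simps)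
    finally show ?thesis using p1 False by (simp add: zero_le_mult_iff)
  qed
  then show "psd2 p1 p2 p3" using p1 p2 by (simp add: psd2_def)
qed

text \<open>The mixed term of the determinant: det (P + Q) = det P + det Q + (p1 q2 + p2 q1 - 2 p3 q3).\<close>

lemma psd2_mixed_term_nonneg:
  assumes "psd2 p1 p2 p3" "psd2 q1 q2 q3"
  shows "2 * p3 * q3 \<le> p1 * q2 + p2 * q1"
proof -
  have "(2 * p3 * q3)\<^sup>2 \<le> 4 * (p1 * p2) * (q1 * q2)"
    using mult_mono[of "p3\<^sup>2" "p1 * p2" "q3\<^sup>2" "q1 * q2"] assms
    by (simp add: psd2_def power_mult_distrib)
  also have "\<dots> \<le> (p1 * q2 + p2 * q1)\<^sup>2"
    using zero_le_power2[of "p1 * q2 - p2 * q1"] by (simp add: power2_eq_square algebra_simps)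
  finally show ?thesis
    using assms power2_le_imp_le[of "2 * p3 * q3" "p1 * q2 + p2 * q1"] by (simp add: psd2_def)
qed

lemma psd2_mixed_term_pos:
  assumes "psd2 p1 p2 p3" "p3\<^sup>2 < p1 * p2" "psd2 q1 q2 q3" "0 < q1 + q2"
  shows "2 * p3 * q3 < p1 * q2 + p2 * q1"
proof -
  have p: "0 < p1" "0 < p2"
    using assms(1,2) by (auto simp: psd2_def less_le zero_le_mult_iff)
  have q: "0 \<le> q1" "0 \<le> q2" "q3\<^sup>2 \<le> q1 * q2" using assms(3) by (simp_all add: psd2_def)
  show ?thesis
  proof (cases "q1 * q2 = 0")
    case True
    then have "q3\<^sup>2 \<le> 0" using q(3) by linarith
    then have "q3 = 0" by simp
    moreover have "0 < p1 * q2 + p2 * q1"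
      using p q assms(4) True by (auto simp: add_pos_nonneg add_nonneg_pos)
    ultimately show ?thesis by simp
  next
    case False
    then have "0 < q1 * q2" using q by (simp add: less_le)
    have "(2 * p3 * q3)\<^sup>2 \<le> 4 * p3\<^sup>2 * (q1 * q2)"
      using mult_left_mono[OF q(3), of "4 * p3\<^sup>2"] by (simp add: power_mult_distrib)
    also have "\<dots> < 4 * (p1 * p2) * (q1 * q2)"
      using mult_strict_right_mono[OF assms(2) \<open>0 < q1 * q2\<close>] by simp
    also have "\<dots> \<le> (p1 * q2 + p2 * q1)\<^sup>2"
      using zero_le_power2[of "p1 * q2 - p2 * q1"] by (simp add: power2_eq_square algebra_simps)
    finally show ?thesis
      using p q power2_less_imp_less[of "2 * p3 * q3" "p1 * q2 + p2 * q1"] by simp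
  qed
qed

lemma psd2_abs_le_trace:
  assumes "psd2 p1 p2 p3"
  shows "\<bar>p1\<bar> \<le> p1 + p2" "\<bar>p2\<bar> \<le> p1 + p2" "\<bar>p3\<bar> \<le> p1 + p2"
proof -
  have "p3\<^sup>2 \<le> (p1 + p2)\<^sup>2"
    using assms by (auto simp: psd2_def power2_eq_square algebra_simps intro: order_trans)
  then show "\<bar>p3\<bar> \<le> p1 + p2"
    using power2_le_imp_le[of "\<bar>p3\<bar>" "p1 + p2"] assms by (simp add: psd2_def)
qed (use assms in \<open>simp_all add: psd2_def\<close>)

section \<open>Elementary inequalities\<close>

lemma ln_mult_powr_le:
  fixes R :: real
  assumes "0 < R" "1 \<le> n"
  shows "ln R * R powr (-1 / n) \<le> n * (1 - R powr (-1 / n))"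
proof -
  define q where "q = R powr (1 / n)"
  have "0 < q" using assms by (simp add: q_def)
  have "ln R = n * ln q"
    using assms by (simp add: q_def ln_powr)
  also have "\<dots> \<le> n * (q - 1)"
    using ln_le_minus_one[OF \<open>0 < q\<close>] assms(2) by simp
  finally have "ln R / q \<le> n * (1 - 1 / q)"
    using \<open>0 < q\<close> by (simp add: field_simps)
  then show ?thesis
    using assms by (simp add: q_def powr_minus_divide divide_inverse)
qed

lemma ln_add_ge_ln_geometric_mean:
  fixes x y :: real
  assumes "0 < x" "0 < y"
  shows "ln 2 + (ln x + ln y) / 2 \<le> ln (x + y)"
proof -
  have "ln 2 + (ln x + ln y) / 2 = ln (2 * sqrt (x * y))"
    using assms by (simp add: ln_mult ln_sqrt)
  also have "\<dots> \<le> ln (x + y)"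
    using arith_geo_mean_sqrt[of x y] assms by simp
  finally show ?thesis .
qed

lemma sum_ln_ratio_ge:
  fixes A :: "nat \<Rightarrow> real"
  assumes "1 \<le> k" "\<And>j. j \<in> {1..k} \<Longrightarrow> 0 < A j"
  shows "(real k - 1) * ln 2 + (ln (A k) - ln (A 1)) / 2 \<le> (\<Sum>j\<in>{1..<k}. ln ((A j + A (Suc j)) / A j))"
  using assms
proof (induction k rule: dec_induct)
  case base
  then show ?case by simp
next
  case (step n)
  have "0 < A n" "0 < A (Suc n)" using step by auto
  then have "ln 2 + (ln (A (Suc n)) - ln (A n)) / 2 \<le> ln ((A n + A (Suc n)) / A n)"
    using ln_add_ge_ln_geometric_mean[of "A n" "A (Suc n)"] ln_div[of "A n + A (Suc n)" "A n"]
    by (simp add: field_simps)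
  moreover have "(real n - 1) * ln 2 + (ln (A n) - ln (A 1)) / 2 \<le> (\<Sum>j\<in>{1..<n}. ln ((A j + A (Suc j)) / A j))"
    using step by simp
  moreover have "(\<Sum>j\<in>{1..<Suc n}. ln ((A j + A (Suc j)) / A j))
      = (\<Sum>j\<in>{1..<n}. ln ((A j + A (Suc j)) / A j)) + ln ((A n + A (Suc n)) / A n)"
    using step.hyps by simp
  moreover have "(real (Suc n) - 1) * ln 2 = (real n - 1) * ln 2 + ln 2"
    by (simp add: algebra_simps)
  ultimately show ?case by (simp add: field_simps)
qed

lemma ln_trace_ge:
  fixes A1 Ak B tr r c :: real
  assumes "0 < A1" "0 < Ak" "0 < r" "0 < c" "c / r\<^sup>2 \<le> Ak * B" "A1 + B \<le> tr"
  shows "ln 2 + (ln A1 - ln Ak) / 2 \<le> ln r + ln (tr / sqrt c)"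
proof -
  have "c / (r * Ak) \<le> r * B"
    using assms by (simp add: field_simps power2_eq_square)
  moreover have "r * A1 + r * B \<le> r * tr"
    using mult_left_mono[OF assms(6)] assms(3) by (simp add: distrib_left)
  ultimately have sum_le: "r * A1 + c / (r * Ak) \<le> r * tr"
    by linarith
  have sum_pos: "0 < r * A1 + c / (r * Ak)"
    using assms by (simp add: add_pos_pos)
  then have "0 < r * tr"
    using sum_le by linarith
  then have "0 < tr"
    using assms(3) by (simp add: zero_less_mult_iff)
  have "ln 2 + (ln A1 - ln Ak) / 2 + ln c / 2 = ln 2 + (ln (r * A1) + ln (c / (r * Ak))) / 2"
    using assms by (simp add: ln_mult ln_div)
  also have "\<dots> \<le> ln (r * A1 + c / (r * Ak))"
    using assms by (intro ln_add_ge_ln_geometric_mean) simp_all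
  also have "\<dots> \<le> ln (r * tr)"
    using sum_le sum_pos by simp
  also have "\<dots> = ln r + ln (tr / sqrt c) + ln c / 2"
    using assms \<open>0 < tr\<close> by (simp add: ln_mult ln_div ln_sqrt)
  finally show ?thesis by simp
qed

section \<open>Chains and intervals with extended real endpoints\<close>

lemma Suc_chain_less:
  fixes s :: "nat \<Rightarrow> 'a::order"
  assumes "\<forall>j<k. s j < s (Suc j)" "i < j" "j \<le> k"
  shows "s i < s j"
proof -
  have "{i..<j} \<subseteq> {..<k}" using assms(3) by auto
  then show ?thesis
    using lift_Suc_mono_less_ivl[of "{..<k}" s i j] assms(1,2) by auto
qed

lemma Suc_chain_le:
  fixes s :: "nat \<Rightarrow> 'a::order"
  assumes "\<forall>j<k. s j < s (Suc j)" "i \<le> j" "j \<le> k"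
  shows "s i \<le> s j"
  using Suc_chain_less[OF assms(1), of i j] assms(2,3) by (cases "i = j") auto

lemma Suc_chain_range:
  fixes s :: "nat \<Rightarrow> 'a::order"
  assumes "lo \<le> s 0" "\<forall>j<k. s j < s (Suc j)" "s k \<le> hi" "i \<le> k"
  shows "lo \<le> s i" "s i \<le> hi"
  using Suc_chain_le[OF assms(2), of 0 i] Suc_chain_le[OF assms(2), of i k] assms(1,3,4)
  by (auto intro: order_trans)

lemma eivl_eq_einterval: "eivl = einterval"
  by (auto simp: eivl_def einterval_def fun_eq_iff)

lemma eivl_ereal [simp]: "eivl (ereal x) (ereal y) = {x<..<y}"
  by (auto simp: eivl_def)

lemma sets_eivl [measurable, simp]: "eivl x y \<in> sets borel" "eivl x y \<in> sets lborel"
  by (simp_all add: eivl_eq_einterval)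

lemma eivl_mono: "x' \<le> x \<Longrightarrow> y \<le> y' \<Longrightarrow> eivl x y \<subseteq> eivl x' y'"
  by (auto simp: eivl_def intro: le_less_trans less_le_trans)

lemma sum_indicator_eivl_le:
  fixes p :: "nat \<Rightarrow> ereal"
  assumes "m \<le> n" "\<And>i. i \<in> {m..<n} \<Longrightarrow> p i \<le> p (Suc i)"
  shows "(\<Sum>i\<in>{m..<n}. indicator (eivl (p i) (p (Suc i))) t :: ennreal) \<le> indicator (eivl (p m) (p n)) t"
  using assms
proof (induction n rule: dec_induct)
  case base
  then show ?case by simp
next
  case (step n)
  have "p m \<le> p n"
    using lift_Suc_mono_le_ivl[of "{m..<n}" p m n] step by auto
  have "(\<Sum>i\<in>{m..<Suc n}. indicator (eivl (p i) (p (Suc i))) t)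
      = (\<Sum>i\<in>{m..<n}. indicator (eivl (p i) (p (Suc i))) t) + (indicator (eivl (p n) (p (Suc n))) t :: ennreal)"
    using step.hyps by simp
  also have "\<dots> \<le> indicator (eivl (p m) (p n)) t + indicator (eivl (p n) (p (Suc n))) t"
    using step by (intro add_right_mono) simp
  also have "\<dots> = indicator (eivl (p m) (p n) \<union> eivl (p n) (p (Suc n))) t"
    by (auto simp: indicator_def eivl_def)
  also have "\<dots> \<le> indicator (eivl (p m) (p (Suc n))) t"
    using \<open>p m \<le> p n\<close> step.prems[of n] step.hyps
    by (intro indicator_leI) (auto simp: eivl_def intro: le_less_trans less_le_trans)
  finally show ?case .
qed

lemma sum_nn_integral_eivl_le:
  fixes p :: "nat \<Rightarrow> ereal" and f :: "real \<Rightarrow> ennreal"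
  assumes "m \<le> n" "\<And>i. i \<in> {m..<n} \<Longrightarrow> p i \<le> p (Suc i)"
    and "\<And>i. i \<in> {m..<n} \<Longrightarrow> (\<lambda>t. f t * indicator (eivl (p i) (p (Suc i))) t) \<in> borel_measurable lborel"
  shows "(\<Sum>i\<in>{m..<n}. \<integral>\<^sup>+t. f t * indicator (eivl (p i) (p (Suc i))) t \<partial>lborel)
    \<le> (\<integral>\<^sup>+t. f t * indicator (eivl (p m) (p n)) t \<partial>lborel)"
proof -
  have "(\<Sum>i\<in>{m..<n}. \<integral>\<^sup>+t. f t * indicator (eivl (p i) (p (Suc i))) t \<partial>lborel)
      = (\<integral>\<^sup>+t. (\<Sum>i\<in>{m..<n}. f t * indicator (eivl (p i) (p (Suc i))) t) \<partial>lborel)"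
    using assms(3) by (rule nn_integral_sum[symmetric])
  also have "\<dots> \<le> (\<integral>\<^sup>+t. f t * indicator (eivl (p m) (p n)) t \<partial>lborel)"
  proof (intro nn_integral_mono)
    fix t
    have "(\<Sum>i\<in>{m..<n}. indicator (eivl (p i) (p (Suc i))) t) \<le> (indicator (eivl (p m) (p n)) t :: ennreal)"
      using assms(1,2) by (rule sum_indicator_eivl_le)
    then show "(\<Sum>i\<in>{m..<n}. f t * indicator (eivl (p i) (p (Suc i))) t) \<le> f t * indicator (eivl (p m) (p n)) t"
      by (simp add: sum_distrib_left[symmetric] mult_left_mono)
  qed
  finally show ?thesis .
qed

lemma Om_eq_interval_integral: "x \<le> y \<Longrightarrow> Om h x y = (LBINT u=x..y. h u)"
  by (simp add: Om_def interval_lebesgue_integral_le_eq eivl_eq_einterval)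

lemma continuous_on_Om:
  assumes "set_integrable lborel {\<sigma><..<y} h"
  shows "continuous_on {\<sigma>..y} (\<lambda>t. Om h (ereal \<sigma>) (ereal t))"
proof -
  have "h integrable_on {\<sigma>..y}"
    using set_borel_integral_eq_integral(1)[OF assms] by (simp add: integrable_on_open_interval_real)
  then have "continuous_on {\<sigma>..y} (\<lambda>t. integral {\<sigma>..t} h)"
    by (rule indefinite_integral_continuous_1)
  moreover have "Om h (ereal \<sigma>) (ereal t) = integral {\<sigma>..t} h" if "t \<in> {\<sigma>..y}" for t
  proof -
    have "set_integrable lborel {\<sigma><..<t} h"
      using that by (intro set_integrable_subset[OF assms]) auto
    then show ?thesis
      by (simp add: Om_def set_borel_integral_eq_integral(2) integral_open_interval_real)
  qed
  ultimately show ?thesis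
    using continuous_on_cong by (metis (no_types, lifting))
qed

section \<open>The matrix function Omega\<close>

locale limit_circle_hamiltonian =
  fixes a :: real and b :: ereal and h1 h2 h3 :: "real \<Rightarrow> real"
  assumes set_integrable: "\<And>h. h \<in> {h1, h2, h3} \<Longrightarrow> set_integrable lborel (eivl a b) h"
    and AE_psd2: "AE t in lborel. t \<in> eivl a b \<longrightarrow> psd2 (h1 t) (h2 t) (h3 t)"
    and null_zero_set: "{t \<in> eivl a b. h1 t = 0 \<and> h2 t = 0 \<and> h3 t = 0} \<in> null_sets lborel"

lemma limit_circle_hamiltonianI:
  assumes "hamiltonian a b h1 h2 h3" "limit_circle a b h1 h2"
  shows "limit_circle_hamiltonian a b h1 h2 h3"
proof
  let ?S = "eivl (ereal a) b"
  show "{t \<in> ?S. h1 t = 0 \<and> h2 t = 0 \<and> h3 t = 0} \<in> null_sets lborel"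
    using assms(1) by (simp add: hamiltonian_def)
  show psd: "AE t in lborel. t \<in> ?S \<longrightarrow> psd2 (h1 t) (h2 t) (h3 t)"
    using assms(1) by (simp add: hamiltonian_def psd2_iff_quadratic_form_nonneg)
  have meas: "(\<lambda>t. indicator ?S t * h t) \<in> borel_measurable lborel" if "h \<in> {h1, h2, h3}" for h
    using assms(1) that by (auto simp: hamiltonian_def set_borel_measurable_def)
  have "integrable lborel (\<lambda>t. indicator ?S t * (h1 t + h2 t))"
  proof (rule integrableI_bounded)
    show "(\<lambda>t. indicator ?S t * (h1 t + h2 t)) \<in> borel_measurable lborel"
      using meas[of h1] meas[of h2] by (simp add: distrib_left)
    have "(\<integral>\<^sup>+t. ennreal (norm (indicator ?S t * (h1 t + h2 t))) \<partial>lborel)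
        = (\<integral>\<^sup>+t\<in>?S. ennreal (h1 t + h2 t) \<partial>lborel)"
      using psd by (intro nn_integral_cong_AE) (auto elim!: eventually_mono simp: indicator_def psd2_def)
    also have "\<dots> < \<infinity>"
      using assms(2) by (simp add: limit_circle_def)
    finally show "(\<integral>\<^sup>+t. ennreal (norm (indicator ?S t * (h1 t + h2 t))) \<partial>lborel) < \<infinity>" .
  qed
  then show "set_integrable lborel ?S h" if "h \<in> {h1, h2, h3}" for h
    unfolding set_integrable_def
  proof (rule Bochner_Integration.integrable_bound)
    show "(\<lambda>t. indicator ?S t *\<^sub>R h t) \<in> borel_measurable lborel"
      using meas[OF that] by simp
    show "AE t in lborel. norm (indicator ?S t *\<^sub>R h t) \<le> norm (indicator ?S t * (h1 t + h2 t))"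
      using psd
    proof eventually_elim
      case (elim t)
      then show ?case
        using that psd2_abs_le_trace[of "h1 t" "h2 t" "h3 t"] by (auto simp: indicator_def)
    qed
  qed
qed

context limit_circle_hamiltonian
begin

lemma set_integrable_eivl:
  "ereal a \<le> x \<Longrightarrow> y \<le> b \<Longrightarrow> h \<in> {h1, h2, h3} \<Longrightarrow> set_integrable lborel (eivl x y) h"
  using set_integrable_subset[OF set_integrable[of h]] eivl_mono[of "ereal a" x y b] by auto

lemma Om_add:
  assumes "ereal a \<le> x" "x \<le> y" "y \<le> z" "z \<le> b" "h \<in> {h1, h2, h3}"
  shows "Om h x z = Om h x y + Om h y z"
proof -
  have "interval_lebesgue_integrable lborel x z h"
    using set_integrable_eivl[OF assms(1,4,5)] order_trans[OF assms(2,3)]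
    by (simp add: interval_lebesgue_integrable_def eivl_eq_einterval)
  then show ?thesis
    using interval_integral_sum[of x y z h] assms order_trans[OF assms(2,3)]
    by (simp add: Om_eq_interval_integral min_def max_def)
qed

lemma AE_nonneg: "AE t in lborel. t \<in> eivl a b \<longrightarrow> 0 \<le> h1 t \<and> 0 \<le> h2 t"
  using AE_psd2 by eventually_elim (simp add: psd2_def)

lemma Om_nonneg:
  assumes "ereal a \<le> x" "y \<le> b" "h \<in> {h1, h2}"
  shows "0 \<le> Om h x y"
  unfolding Om_def set_lebesgue_integral_def
proof (rule integral_nonneg_AE)
  show "AE t in lborel. 0 \<le> indicat_real (eivl x y) t *\<^sub>R h t"
    using AE_nonneg
  proof eventually_elim
    case (elim t)
    then show ?case using assms eivl_mono[OF assms(1,2)] by (auto simp: indicator_def)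
  qed
qed

lemma Om_mono:
  assumes "ereal a \<le> x" "x \<le> x'" "x' \<le> y'" "y' \<le> y" "y \<le> b" "h \<in> {h1, h2}"
  shows "Om h x' y' \<le> Om h x y"
proof -
  have "Om h x y = Om h x x' + Om h x' y' + Om h y' y"
    using Om_add[of x x' y h] Om_add[of x' y' y h] assms by (auto intro: order_trans)
  moreover have "0 \<le> Om h x x'" "0 \<le> Om h y' y"
    using Om_nonneg assms by (auto intro: order_trans)
  ultimately show ?thesis by simp
qed

lemma Om_psd2:
  assumes "ereal a \<le> x" "y \<le> b"
  shows "psd2 (Om h1 x y) (Om h2 x y) (Om h3 x y)"
  unfolding psd2_iff_quadratic_form_nonneg
proof (intro allI)
  fix \<alpha> \<beta> :: real
  let ?S = "eivl x y"
  have int: "integrable lborel (\<lambda>t. indicator ?S t * h t)" if "h \<in> {h1, h2, h3}" for h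
    using set_integrable_eivl[OF assms that] by (simp add: set_integrable_def)
  let ?q = "\<lambda>t. \<alpha>\<^sup>2 * (indicator ?S t * h1 t) + 2 * \<alpha> * \<beta> * (indicator ?S t * h3 t) + \<beta>\<^sup>2 * (indicator ?S t * h2 t)"
  have "\<alpha>\<^sup>2 * Om h1 x y + 2 * \<alpha> * \<beta> * Om h3 x y + \<beta>\<^sup>2 * Om h2 x y = (\<integral>t. ?q t \<partial>lborel)"
    using int[of h1] int[of h2] int[of h3]
    by (simp add: Om_def set_lebesgue_integral_def Bochner_Integration.integral_add)
  also have "\<dots> \<ge> 0"
  proof (rule integral_nonneg_AE)
    show "AE t in lborel. 0 \<le> ?q t"
      using AE_psd2
    proof eventually_elim
      case (elim t)
      then show ?case
        using eivl_mono[OF assms] by (auto simp: indicator_def psd2_iff_quadratic_form_nonneg mult_ac)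
    qed
  qed
  finally show "0 \<le> Om h1 x y * \<alpha>\<^sup>2 + 2 * Om h3 x y * \<alpha> * \<beta> + Om h2 x y * \<beta>\<^sup>2"
    by (simp add: mult_ac)
qed

lemma detOm_nonneg: "ereal a \<le> x \<Longrightarrow> y \<le> b \<Longrightarrow> 0 \<le> detOm h1 h2 h3 x y"
  using Om_psd2 by (simp add: detOm_def psd2_def)

lemma Om_h1_pos_if_detOm_pos:
  assumes "ereal a \<le> x" "y \<le> b" "0 < detOm h1 h2 h3 x y"
  shows "0 < Om h1 x y"
proof -
  have "0 < Om h1 x y * Om h2 x y"
    using assms(3) zero_le_power2[of "Om h3 x y"] unfolding detOm_def by linarith
  then show ?thesis
    using Om_psd2[OF assms(1,2)] by (auto simp: psd2_def less_le)
qed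

lemma detOm_split:
  assumes "ereal a \<le> x" "x \<le> y" "y \<le> z" "z \<le> b"
  shows "detOm h1 h2 h3 x z = detOm h1 h2 h3 x y + detOm h1 h2 h3 y z
    + (Om h1 x y * Om h2 y z + Om h2 x y * Om h1 y z - 2 * Om h3 x y * Om h3 y z)"
  using Om_add[OF assms, of h1] Om_add[OF assms, of h2] Om_add[OF assms, of h3]
  by (simp add: detOm_def power2_eq_square algebra_simps)

lemma detOm_superadditive:
  assumes "ereal a \<le> x" "x \<le> y" "y \<le> z" "z \<le> b"
  shows "detOm h1 h2 h3 x y + detOm h1 h2 h3 y z \<le> detOm h1 h2 h3 x z"
  using detOm_split[OF assms] psd2_mixed_term_nonneg[OF Om_psd2 Om_psd2, of x y y z] assms
  by (auto intro: order_trans)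

lemma AE_zero_if_Om_eq_0:
  assumes "ereal a \<le> x" "y \<le> b" "h \<in> {h1, h2}" "Om h x y = 0"
  shows "AE t in lborel. t \<in> eivl x y \<longrightarrow> h t = 0"
proof -
  let ?f = "\<lambda>t. indicator (eivl x y) t * h t"
  have "integrable lborel ?f"
    using set_integrable_eivl[OF assms(1,2)] assms(3) by (auto simp: set_integrable_def)
  moreover have "AE t in lborel. 0 \<le> ?f t"
    using AE_nonneg
  proof eventually_elim
    case (elim t)
    then show ?case using assms(3) eivl_mono[OF assms(1,2)] by (auto simp: indicator_def)
  qed
  moreover have "integral\<^sup>L lborel ?f = 0"
    using assms(4) by (simp add: Om_def set_lebesgue_integral_def)
  ultimately have "AE t in lborel. ?f t = 0"
    using integral_nonneg_eq_0_iff_AE by blast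
  then show ?thesis
    by eventually_elim (auto simp: indicator_def)
qed

lemma trOm_pos:
  assumes "ereal a \<le> x" "x < y" "y \<le> b"
  shows "0 < trOm h1 h2 x y"
proof (rule ccontr)
  assume "\<not> 0 < trOm h1 h2 x y"
  then have "Om h1 x y = 0" "Om h2 x y = 0"
    using Om_nonneg[OF assms(1,3), of h1] Om_nonneg[OF assms(1,3), of h2] by (auto simp: trOm_def)
  then have "AE t in lborel. t \<in> eivl x y \<longrightarrow> h1 t = 0" "AE t in lborel. t \<in> eivl x y \<longrightarrow> h2 t = 0"
    using AE_zero_if_Om_eq_0[OF assms(1,3)] by simp_all
  \<comment> \<open>then H vanishes a.e. on (x, y), but its zero set is null\<close>
  then have "AE t in lborel. t \<notin> eivl x y"
    using AE_psd2 AE_not_in[OF null_zero_set]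
  proof eventually_elim
    case (elim t)
    then show ?case
      using eivl_mono[OF assms(1,3)] by (auto simp: psd2_def)
  qed
  then have null: "eivl x y \<in> null_sets lborel"
    by (simp add: AE_iff_null_sets)
  obtain p q where "x < ereal p" "ereal p < ereal q" "ereal q < y"
    using ereal_dense2[OF assms(2)] ereal_dense2 by (metis less_ereal.simps(1))
  then have "{p<..<q} \<subseteq> eivl x y" "p < q"
    by (auto simp: eivl_def intro: less_trans[of x "ereal p"] less_trans[of _ "ereal q" y])
  then have "emeasure lborel {p<..<q} = 0"
    using null_sets_subset[OF null] by (simp add: null_sets_def)
  with \<open>p < q\<close> show False
    by simp
qed

lemma detOm_strictly_superadditive:
  assumes "ereal a \<le> x" "x \<le> y" "y \<le> z" "z \<le> b"
    and "0 < detOm h1 h2 h3 x y \<and> y < z \<or> 0 < detOm h1 h2 h3 y z \<and> x < y"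
  shows "detOm h1 h2 h3 x y + detOm h1 h2 h3 y z < detOm h1 h2 h3 x z"
proof -
  have y: "ereal a \<le> y" "y \<le> b" using assms(1-4) by (auto intro: order_trans)
  note P = Om_psd2[OF assms(1) y(2)] and Q = Om_psd2[OF y(1) assms(4)]
  have "2 * Om h3 x y * Om h3 y z < Om h1 x y * Om h2 y z + Om h2 x y * Om h1 y z"
    using assms(5)
  proof
    assume "0 < detOm h1 h2 h3 x y \<and> y < z"
    then show ?thesis
      using psd2_mixed_term_pos[OF P _ Q] trOm_pos[OF y(1) _ assms(4)]
      by (simp add: detOm_def trOm_def)
  next
    assume "0 < detOm h1 h2 h3 y z \<and> x < y"
    then show ?thesis
      using psd2_mixed_term_pos[OF Q _ P] trOm_pos[OF assms(1) _ y(2)]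
      by (simp add: detOm_def trOm_def mult_ac)
  qed
  then show ?thesis
    using detOm_split[OF assms(1-4)] by simp
qed

text \<open>These locate the points of a compatible pair: an interval with determinant at least d
  cannot lie strictly inside an interval with determinant at most d.\<close>

lemma detOm_level_left:
  assumes "ereal a \<le> \<sigma>" "ereal a \<le> x" "x \<le> y" "y \<le> t" "t \<le> b"
    and "0 < detOm h1 h2 h3 x y" "detOm h1 h2 h3 \<sigma> t \<le> detOm h1 h2 h3 x y"
  shows "x \<le> \<sigma>"
proof (rule ccontr)
  assume "\<not> x \<le> \<sigma>"
  then have "\<sigma> < x" by simp
  have "ereal a \<le> y" using assms(2,3) by (rule order_trans)
  then have "detOm h1 h2 h3 x y \<le> detOm h1 h2 h3 x t"
    using detOm_superadditive[OF assms(2-5)] detOm_nonneg[of y t] assms(5) by simp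
  moreover have "detOm h1 h2 h3 \<sigma> x + detOm h1 h2 h3 x t < detOm h1 h2 h3 \<sigma> t"
    using detOm_strictly_superadditive[OF assms(1) _ _ assms(5)] \<open>\<sigma> < x\<close> calculation assms(3,4,6)
    by (auto intro: order_trans)
  ultimately show False
    using detOm_nonneg[OF assms(1), of x] assms(2-5,7) by (auto intro: order_trans)
qed

lemma detOm_level_right:
  assumes "ereal a \<le> \<sigma>" "\<sigma> \<le> x" "x \<le> y" "y \<le> b" "t \<le> b"
    and "0 < detOm h1 h2 h3 x y" "detOm h1 h2 h3 \<sigma> t \<le> detOm h1 h2 h3 x y"
  shows "t \<le> y"
proof (rule ccontr)
  assume "\<not> t \<le> y"
  then have "y < t" by simp
  have "x \<le> b" using assms(3,4) by (rule order_trans)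
  then have "detOm h1 h2 h3 x y \<le> detOm h1 h2 h3 \<sigma> y"
    using detOm_superadditive[OF assms(1-4)] detOm_nonneg[OF assms(1)] by fastforce
  moreover have "detOm h1 h2 h3 \<sigma> y + detOm h1 h2 h3 y t < detOm h1 h2 h3 \<sigma> t"
    using detOm_strictly_superadditive[OF assms(1) _ _ assms(5)] \<open>y < t\<close> calculation assms(2,3,6)
    by (auto intro: order_trans)
  ultimately show False
    using detOm_nonneg[of y t] assms(1-5,7) \<open>y < t\<close> by (auto intro: order_trans)
qed

section \<open>Integrating the logarithmic derivative of omega_1\<close>

lemma continuous_on_Om_h1:
  assumes "ereal a \<le> ereal \<sigma>" "ereal y < b"
  shows "continuous_on {\<sigma>..y} (\<lambda>t. Om h1 (ereal \<sigma>) (ereal t))"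
  using continuous_on_Om set_integrable_eivl[of "ereal \<sigma>" "ereal y" h1] assms by simp

lemma borel_measurable_h1_div_Om_h1:
  assumes "ereal a \<le> \<sigma>" "\<sigma> \<le> x" "x < y" "y \<le> b"
  shows "(\<lambda>t. ennreal (h1 t / Om h1 \<sigma> (ereal t)) * indicator (eivl x y) t) \<in> borel_measurable lborel"
proof -
  obtain \<sigma>' where \<sigma>': "\<sigma> = ereal \<sigma>'"
    using assms by (cases \<sigma>) auto
  let ?S = "eivl x y" and ?F = "\<lambda>t. Om h1 \<sigma> (ereal t)"
  have "continuous_on ?S ?F"
  proof (rule continuous_at_imp_continuous_on, rule ballI)
    fix t assume t: "t \<in> ?S"
    then have "x < ereal t" "ereal t < y" by (auto simp: eivl_def)
    then have "ereal \<sigma>' < ereal t" "ereal t < b"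
      using assms(2,4) \<sigma>' le_less_trans less_le_trans by blast+
    then have "\<sigma>' < t" by simp
    obtain y' where "t < y'" "ereal y' < b"
      using ereal_dense2[OF \<open>ereal t < b\<close>] by auto
    then have "continuous_on {\<sigma>'..y'} ?F" "t \<in> interior {\<sigma>'..y'}"
      using continuous_on_Om_h1[of \<sigma>'] assms(1) \<sigma>' \<open>\<sigma>' < t\<close> by simp_all
    then show "isCont ?F t"
      by (rule continuous_on_interior)
  qed
  then have F: "(\<lambda>t. indicator ?S t *\<^sub>R ?F t) \<in> borel_measurable borel"
    by (intro borel_measurable_continuous_on_indicator) simp_all
  have h: "(\<lambda>t. indicator ?S t *\<^sub>R h1 t) \<in> borel_measurable borel"
    using set_integrable_eivl[of x y h1] assms unfolding set_integrable_def
    by (simp add: borel_measurable_integrable order_trans)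
  have eq: "(\<lambda>t. ennreal (h1 t / ?F t) * indicator ?S t)
      = (\<lambda>t. ennreal ((indicator ?S t *\<^sub>R h1 t) / (indicator ?S t *\<^sub>R ?F t)))"
    by (auto simp: indicator_def fun_eq_iff)
  show ?thesis
    unfolding eq using F h by measurable
qed

lemma Om_h1_increment_le_nn_integral:
  assumes "ereal a \<le> \<sigma>" "\<sigma> \<le> x" "x < y" "y \<le> b" "0 < Om h1 \<sigma> x"
  shows "ennreal (1 - Om h1 \<sigma> x / Om h1 \<sigma> y)
    \<le> (\<integral>\<^sup>+t. ennreal (h1 t / Om h1 \<sigma> (ereal t)) * indicator (eivl x y) t \<partial>lborel)"
proof -
  let ?S = "eivl x y" and ?F = "\<lambda>t. Om h1 \<sigma> (ereal t)"
  have ax: "ereal a \<le> x" using assms(1,2) by (rule order_trans)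
  have F_bounds: "Om h1 \<sigma> x \<le> ?F t" "?F t \<le> Om h1 \<sigma> y" if "t \<in> ?S" for t
    using that Om_mono[OF assms(1) order_refl assms(2), of "ereal t" h1]
      Om_mono[OF assms(1) order_refl, of "ereal t" y h1] assms(2,4)
    by (auto simp: eivl_def intro: order_trans less_imp_le)
  have "0 < Om h1 \<sigma> y"
    using Om_mono[OF assms(1) order_refl assms(2) less_imp_le[OF assms(3)] assms(4), of h1] assms(5) by simp
  have "1 - Om h1 \<sigma> x / Om h1 \<sigma> y = Om h1 x y / Om h1 \<sigma> y"
    using Om_add[OF assms(1,2) less_imp_le[OF assms(3)] assms(4), of h1] \<open>0 < Om h1 \<sigma> y\<close>
    by (simp add: field_simps)
  also have "\<dots> = (\<integral>t. indicator ?S t * h1 t / Om h1 \<sigma> y \<partial>lborel)"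
    by (simp add: Om_def set_lebesgue_integral_def)
  finally have "ennreal (1 - Om h1 \<sigma> x / Om h1 \<sigma> y) = (\<integral>\<^sup>+t. ennreal (indicator ?S t * h1 t / Om h1 \<sigma> y) \<partial>lborel)"
  proof (simp only:, intro nn_integral_eq_integral[symmetric])
    show "integrable lborel (\<lambda>t. indicator ?S t * h1 t / Om h1 \<sigma> y)"
      using set_integrable_eivl[OF ax assms(4), of h1] by (simp add: set_integrable_def)
    show "AE t in lborel. 0 \<le> indicator ?S t * h1 t / Om h1 \<sigma> y"
      using AE_nonneg
    proof eventually_elim
      case (elim t)
      then show ?case using eivl_mono[OF ax assms(4)] \<open>0 < Om h1 \<sigma> y\<close> by (auto simp: indicator_def)
    qed
  qed
  also have "\<dots> \<le> (\<integral>\<^sup>+t. ennreal (h1 t / ?F t) * indicator ?S t \<partial>lborel)"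
  proof (rule nn_integral_mono_AE)
    show "AE t in lborel. ennreal (indicator ?S t * h1 t / Om h1 \<sigma> y) \<le> ennreal (h1 t / ?F t) * indicator ?S t"
      using AE_nonneg
    proof eventually_elim
      case (elim t)
      show ?case
      proof (cases "t \<in> ?S")
        case True
        then have "h1 t / Om h1 \<sigma> y \<le> h1 t / ?F t"
          using elim eivl_mono[OF ax assms(4)] F_bounds[OF True] assms(5)
          by (intro divide_left_mono) auto
        then show ?thesis using True by (simp add: ennreal_leI)
      qed simp
    qed
  qed
  finally show ?thesis .
qed

lemma tendsto_Om:
  assumes "ereal a \<le> x" "v \<le> b" "h \<in> {h1, h2, h3}"
    and "incseq X" "\<And>i. x \<le> ereal (X i)" "\<And>i. ereal (X i) < v" "(\<lambda>i. ereal (X i)) \<longlonglongrightarrow> v"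
  shows "(\<lambda>i. Om h x (ereal (X i))) \<longlonglongrightarrow> Om h x v"
proof -
  have "(\<Union>i. eivl x (ereal (X i))) = eivl x v"
  proof (intro equalityI subsetI)
    fix t assume "t \<in> eivl x v"
    then have "eventually (\<lambda>i. ereal t < ereal (X i)) sequentially"
      using order_tendstoD(1)[OF assms(7), of "ereal t"] by (simp add: eivl_def)
    then obtain i where "ereal t < ereal (X i)"
      using eventually_happens'[OF sequentially_bot] by blast
    then show "t \<in> (\<Union>i. eivl x (ereal (X i)))"
      using \<open>t \<in> eivl x v\<close> by (auto simp: eivl_def)
  next
    fix t assume "t \<in> (\<Union>i. eivl x (ereal (X i)))"
    then obtain i where "x < ereal t" "ereal t < ereal (X i)" by (auto simp: eivl_def)
    then show "t \<in> eivl x v"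
      using less_trans[of "ereal t" "ereal (X i)" v] assms(6)[of i] by (simp add: eivl_def)
  qed
  moreover have "incseq (\<lambda>i. eivl x (ereal (X i)))"
    using assms(4) by (auto simp: incseq_def eivl_def intro: less_le_trans)
  ultimately show ?thesis
    unfolding Om_def using set_integral_cont_up[of "\<lambda>i. eivl x (ereal (X i))" lborel h]
      set_integrable_eivl[OF assms(1,2,3)] by simp
qed

lemma Om_h1_intermediate_value:
  assumes "ereal a \<le> ereal \<sigma>" "\<sigma> \<le> u" "ereal u < v" "v \<le> b"
    and "Om h1 (ereal \<sigma>) (ereal u) \<le> w" "w < Om h1 (ereal \<sigma>) v"
  shows "\<exists>t. u \<le> t \<and> ereal t < v \<and> Om h1 (ereal \<sigma>) (ereal t) = w"
proof -
  obtain X :: "nat \<Rightarrow> real" where X: "incseq X" "\<And>i. ereal u < X i" "\<And>i. X i < v" "X \<longlonglongrightarrow> v"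
    using ereal_incseq_approx[OF assms(3)] by blast
  have "(\<lambda>i. Om h1 (ereal \<sigma>) (ereal (X i))) \<longlonglongrightarrow> Om h1 (ereal \<sigma>) v"
  proof (intro tendsto_Om[OF assms(1,4)])
    show "ereal \<sigma> \<le> ereal (X i)" for i
      using X(2)[of i] assms(2) by simp
  qed (use X in simp_all)
  then obtain i where "w < Om h1 (ereal \<sigma>) (ereal (X i))"
    using order_tendstoD(1)[OF _ assms(6)] eventually_happens'[OF sequentially_bot] by blast
  moreover have "continuous_on {u..X i} (\<lambda>t. Om h1 (ereal \<sigma>) (ereal t))"
  proof (rule continuous_on_subset)
    show "continuous_on {\<sigma>..X i} (\<lambda>t. Om h1 (ereal \<sigma>) (ereal t))"
      using continuous_on_Om_h1[OF assms(1)] less_le_trans[OF X(3) assms(4)] by blast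
  qed (use assms(2) in auto)
  moreover have "u \<le> X i"
    using X(2)[of i] by simp
  ultimately obtain t where "u \<le> t" "t \<le> X i" "Om h1 (ereal \<sigma>) (ereal t) = w"
    using IVT'[of "\<lambda>t. Om h1 (ereal \<sigma>) (ereal t)" u w "X i"] assms(5) by (meson less_imp_le)
  then show ?thesis
    using le_less_trans[of "ereal t" "ereal (X i)" v] X(3)[of i] by auto
qed

lemma Om_h1_partition:
  assumes "ereal a \<le> ereal \<sigma>" "\<sigma> \<le> u" "ereal u < v" "v \<le> b"
    and W: "\<And>i. i < n \<Longrightarrow> W i < W (Suc i)" "W 0 = Om h1 (ereal \<sigma>) (ereal u)" "W n = Om h1 (ereal \<sigma>) v"
  obtains p where "ereal u \<le> p 0" "p n = v" "\<And>i. ereal \<sigma> \<le> p i" "\<And>i. p i \<le> b"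
    "\<And>i. i < n \<Longrightarrow> p i < p (Suc i)" "\<And>i. i \<le> n \<Longrightarrow> Om h1 (ereal \<sigma>) (p i) = W i"
proof -
  have "\<exists>t. u \<le> t \<and> ereal t < v \<and> Om h1 (ereal \<sigma>) (ereal t) = W i" if "i < n" for i
  proof (rule Om_h1_intermediate_value[OF assms(1-4)])
    have "{0..<i} \<subseteq> {..<n}" "{i..<n} \<subseteq> {..<n}" using that by auto
    then show "Om h1 (ereal \<sigma>) (ereal u) \<le> W i" "W i < Om h1 (ereal \<sigma>) v"
      using lift_Suc_mono_le_ivl[of "{..<n}" W 0 i] lift_Suc_mono_less_ivl[of "{..<n}" W i n] W that
      by (auto simp: less_imp_le)
  qed
  then obtain T where T: "\<And>i. i < n \<Longrightarrow> u \<le> T i \<and> ereal (T i) < v \<and> Om h1 (ereal \<sigma>) (ereal (T i)) = W i"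
    by metis
  define p where "p i = (if i < n then ereal (T i) else v)" for i
  show thesis
  proof (rule that)
    show "ereal u \<le> p 0" "p n = v"
      using T[of 0] less_imp_le[OF assms(3)] by (auto simp: p_def)
    have "ereal \<sigma> \<le> v"
      using assms(2) less_imp_le[OF assms(3)] by (metis ereal_less_eq(3) order_trans)
    then show \<sigma>_le: "ereal \<sigma> \<le> p i" and le_b: "p i \<le> b" for i
      using T[of i] assms(2,4) by (auto simp: p_def intro: order_trans less_imp_le)
    show val: "Om h1 (ereal \<sigma>) (p i) = W i" if "i \<le> n" for i
      using T[of i] W(3) that by (cases "i = n") (auto simp: p_def)
    show "p i < p (Suc i)" if "i < n" for i
    proof (rule ccontr)
      assume "\<not> p i < p (Suc i)"
      then have "Om h1 (ereal \<sigma>) (p (Suc i)) \<le> Om h1 (ereal \<sigma>) (p i)"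
        using Om_mono[OF assms(1) order_refl \<sigma>_le _ le_b] by simp
      then show False
        using val[of i] val[of "Suc i"] W(1)[OF that] that by simp
    qed
  qed
qed

lemma sum_increment_ratios_le_nn_integral:
  assumes "ereal a \<le> ereal \<sigma>" "\<sigma> \<le> u" "ereal u < v" "v \<le> b"
    and W: "\<And>i. i < n \<Longrightarrow> W i < W (Suc i)" "W 0 = Om h1 (ereal \<sigma>) (ereal u)" "W n = Om h1 (ereal \<sigma>) v" "0 < W 0"
  shows "ennreal (\<Sum>i<n. 1 - W i / W (Suc i))
    \<le> (\<integral>\<^sup>+t. ennreal (h1 t / Om h1 (ereal \<sigma>) (ereal t)) * indicator (eivl (ereal u) v) t \<partial>lborel)"
proof -
  let ?f = "\<lambda>t. ennreal (h1 t / Om h1 (ereal \<sigma>) (ereal t))"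
  obtain p where p: "ereal u \<le> p 0" "p n = v" "\<And>i. ereal \<sigma> \<le> p i" "\<And>i. p i \<le> b"
    "\<And>i. i < n \<Longrightarrow> p i < p (Suc i)" "\<And>i. i \<le> n \<Longrightarrow> Om h1 (ereal \<sigma>) (p i) = W i"
    using Om_h1_partition[OF assms(1-4) W(1-3)] by blast
  have W_pos: "0 < W i" if "i \<le> n" for i
  proof -
    have "{0..<i} \<subseteq> {..<n}" using that by auto
    then show ?thesis
      using lift_Suc_mono_le_ivl[of "{..<n}" W 0 i] W(1,4) by (auto simp: less_imp_le)
  qed
  have "ennreal (\<Sum>i<n. 1 - W i / W (Suc i)) = (\<Sum>i<n. ennreal (1 - W i / W (Suc i)))"
    using W(1) W_pos by (intro sum_ennreal[symmetric]) (simp add: less_imp_le)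
  also have "\<dots> \<le> (\<Sum>i<n. \<integral>\<^sup>+t. ?f t * indicator (eivl (p i) (p (Suc i))) t \<partial>lborel)"
  proof (intro sum_mono)
    fix i assume "i \<in> {..<n}"
    then show "ennreal (1 - W i / W (Suc i)) \<le> (\<integral>\<^sup>+t. ?f t * indicator (eivl (p i) (p (Suc i))) t \<partial>lborel)"
      using Om_h1_increment_le_nn_integral[OF assms(1) p(3) p(5) p(4)] p(6) W_pos by simp
  qed
  also have "\<dots> \<le> (\<integral>\<^sup>+t. ?f t * indicator (eivl (p 0) (p n)) t \<partial>lborel)"
    using sum_nn_integral_eivl_le[of 0 n p ?f] p(5)
      borel_measurable_h1_div_Om_h1[OF assms(1) p(3) p(5) p(4)]
    by (simp add: atLeast0LessThan less_imp_le)
  also have "\<dots> \<le> (\<integral>\<^sup>+t. ?f t * indicator (eivl (ereal u) v) t \<partial>lborel)"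
    using eivl_mono[OF p(1)] p(2) by (intro nn_integral_mono mult_left_mono indicator_leI) auto
  finally show ?thesis .
qed

lemma ln_Om_h1_ratio_le_nn_integral:
  assumes "ereal a \<le> \<sigma>" "\<sigma> \<le> u" "u < v" "v \<le> b" "0 < Om h1 \<sigma> u"
  shows "ennreal (ln (Om h1 \<sigma> v / Om h1 \<sigma> u))
    \<le> (\<integral>\<^sup>+t. ennreal (h1 t / Om h1 \<sigma> (ereal t)) * indicator (eivl u v) t \<partial>lborel)"
    (is "_ \<le> ?I")
proof -
  obtain \<sigma>' u' where \<sigma>': "\<sigma> = ereal \<sigma>'" and u': "u = ereal u'"
    using assms(1-3) by (cases \<sigma>; cases u) auto
  define R where "R = Om h1 \<sigma> v / Om h1 \<sigma> u"
  have "Om h1 \<sigma> u \<le> Om h1 \<sigma> v"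
    using Om_mono[OF assms(1) order_refl assms(2) _ assms(4)] assms(3) by simp
  then have "1 \<le> R"
    using assms(5) by (simp add: R_def)
  show ?thesis
  proof (cases "R = 1")
    case False
    then have "1 < R" using \<open>1 \<le> R\<close> by simp
    \<comment> \<open>a geometric partition of the range of omega_1(sigma, .); each of its n pieces
      contributes 1 - R^(-1/n)\<close>
    have bound: "ennreal (ln R * R powr (-1 / n)) \<le> ?I" if "1 \<le> n" for n :: nat
    proof -
      define W where "W i = Om h1 \<sigma> u * R powr (i / n)" for i :: nat
      have "W i / W (Suc i) = R powr (-1 / n)" for i
        using assms(5) \<open>1 < R\<close> by (simp add: W_def powr_diff[symmetric] diff_divide_distrib[symmetric])
      then have "(\<Sum>i<n. 1 - W i / W (Suc i)) = n * (1 - R powr (-1 / n))"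
        by simp
      moreover have "ennreal (\<Sum>i<n. 1 - W i / W (Suc i)) \<le> ?I"
        unfolding \<sigma>' u'
      proof (rule sum_increment_ratios_le_nn_integral)
        show "W i < W (Suc i)" for i
          using assms(5) \<open>1 < R\<close> that by (simp add: W_def divide_strict_right_mono)
        show "W n = Om h1 (ereal \<sigma>') v"
          using assms(5) that Om_nonneg[OF assms(1,4), of h1] by (simp add: W_def R_def \<sigma>')
      qed (use assms \<sigma>' u' \<open>1 < R\<close> in \<open>simp_all add: W_def\<close>)
      ultimately show ?thesis
        using ln_mult_powr_le[of R n] \<open>1 < R\<close> that
        by (auto intro: order_trans[OF ennreal_leI])
    qed
    have "(\<lambda>n. -1 / real n) \<longlonglongrightarrow> 0"
      by (intro tendsto_divide_0[OF tendsto_const] filterlim_at_top_imp_at_infinity filterlim_real_sequentially)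
    then have "(\<lambda>n. ennreal (ln R * R powr (-1 / n))) \<longlonglongrightarrow> ennreal (ln R * R powr 0)"
      using \<open>1 < R\<close> by (intro tendsto_ennrealI tendsto_mult tendsto_const tendsto_powr) simp_all
    moreover have "\<exists>N. \<forall>n\<ge>N. ennreal (ln R * R powr (-1 / real n)) \<le> ?I"
      using bound by (intro exI[of _ 1]) simp
    ultimately have "ennreal (ln R) \<le> ?I"
      using \<open>1 < R\<close> LIMSEQ_le_const2 by fastforce
    then show ?thesis
      by (simp add: R_def)
  qed (simp add: R_def)
qed

lemma AE_sum_h1_div_Om_h1_le:
  assumes chain: "ereal a \<le> s 0" "\<forall>j<k. s j < s (Suc j)" "s k \<le> b"
    and \<sigma>: "\<And>j t. j \<in> {1..<k} \<Longrightarrow> t \<in> eivl (s j) (s (Suc j)) \<Longrightarrow>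
      s (j - 1) \<le> ereal (\<sigma> t) \<and> \<sigma> t \<le> t \<and> 0 < Om h1 (ereal (\<sigma> t)) (ereal t)"
  shows "AE t in lborel. (\<Sum>j\<in>{1..<k}. ennreal (h1 t / Om h1 (s (j - 1)) (ereal t)) * indicator (eivl (s j) (s (Suc j))) t)
    \<le> ennreal (h1 t / Om h1 (ereal (\<sigma> t)) (ereal t)) * indicator (eivl (s 1) (s k)) t"
  using AE_nonneg
proof eventually_elim
  case (elim t)
  let ?f = "ennreal (h1 t / Om h1 (ereal (\<sigma> t)) (ereal t))"
  note s_range = Suc_chain_range[OF chain]
  have "ennreal (h1 t / Om h1 (s (j - 1)) (ereal t)) * indicator (eivl (s j) (s (Suc j))) t
      \<le> ?f * indicator (eivl (s j) (s (Suc j))) t" if j: "j \<in> {1..<k}" for j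
  proof (cases "t \<in> eivl (s j) (s (Suc j))")
    case True
    have "eivl (s j) (s (Suc j)) \<subseteq> eivl (ereal a) b"
      using j by (intro eivl_mono s_range) simp_all
    then have "0 \<le> h1 t"
      using elim True by auto
    moreover have "Om h1 (ereal (\<sigma> t)) (ereal t) \<le> Om h1 (s (j - 1)) (ereal t)"
      using \<sigma>[OF j True] True j s_range[of "j - 1"] s_range[of "Suc j"]
      by (intro Om_mono) (auto simp: eivl_def)
    ultimately show ?thesis
      using \<sigma>[OF j True] True by (auto intro!: ennreal_leI divide_left_mono)
  qed simp
  then have "(\<Sum>j\<in>{1..<k}. ennreal (h1 t / Om h1 (s (j - 1)) (ereal t)) * indicator (eivl (s j) (s (Suc j))) t)
      \<le> ?f * (\<Sum>j\<in>{1..<k}. indicator (eivl (s j) (s (Suc j))) t)"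
    unfolding sum_distrib_left by (rule sum_mono)
  also have "\<dots> \<le> ?f * indicator (eivl (s 1) (s k)) t"
  proof (intro mult_left_mono)
    show "(\<Sum>j\<in>{1..<k}. indicator (eivl (s j) (s (Suc j))) t) \<le> (indicator (eivl (s 1) (s k)) t :: ennreal)"
    proof (cases "1 \<le> k")
      case True
      then show ?thesis
        using chain(2) by (intro sum_indicator_eivl_le) (simp_all add: less_imp_le)
    qed simp
  qed simp
  finally show ?case .
qed

lemma sum_ln_Om_h1_ratios_le_nn_integral:
  assumes chain: "ereal a \<le> s 0" "\<forall>j<k. s j < s (Suc j)" "s k \<le> b"
    and pos: "\<And>j. j \<in> {1..<k} \<Longrightarrow> 0 < Om h1 (s (j - 1)) (s j)"
    and \<sigma>: "\<And>j t. j \<in> {1..<k} \<Longrightarrow> t \<in> eivl (s j) (s (Suc j)) \<Longrightarrow>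
      s (j - 1) \<le> ereal (\<sigma> t) \<and> \<sigma> t \<le> t \<and> 0 < Om h1 (ereal (\<sigma> t)) (ereal t)"
  shows "ennreal (\<Sum>j\<in>{1..<k}. ln (Om h1 (s (j - 1)) (s (Suc j)) / Om h1 (s (j - 1)) (s j)))
    \<le> (\<integral>\<^sup>+ t \<in> eivl (s 1) (s k). ennreal (h1 t / Om h1 (ereal (\<sigma> t)) (ereal t)) \<partial>lborel)"
proof -
  define g where "g j t = ennreal (h1 t / Om h1 (s (j - 1)) (ereal t)) * indicator (eivl (s j) (s (Suc j))) t"
    for j t
  note s_range = Suc_chain_range[OF chain]
  have j_facts: "ereal a \<le> s (j - 1)" "s (j - 1) \<le> s j" "s j < s (Suc j)" "s (Suc j) \<le> b"
    if "j \<in> {1..<k}" for j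
    using that chain(2) s_range Suc_chain_le[OF chain(2), of "j - 1" j] by auto
  have "Om h1 (s (j - 1)) (s j) \<le> Om h1 (s (j - 1)) (s (Suc j))" if "j \<in> {1..<k}" for j
    using j_facts[OF that] by (intro Om_mono) auto
  then have "ennreal (\<Sum>j\<in>{1..<k}. ln (Om h1 (s (j - 1)) (s (Suc j)) / Om h1 (s (j - 1)) (s j)))
      = (\<Sum>j\<in>{1..<k}. ennreal (ln (Om h1 (s (j - 1)) (s (Suc j)) / Om h1 (s (j - 1)) (s j))))"
    using pos by (intro sum_ennreal[symmetric]) simp
  also have "\<dots> \<le> (\<Sum>j\<in>{1..<k}. integral\<^sup>N lborel (g j))"
    unfolding g_def using j_facts pos by (intro sum_mono ln_Om_h1_ratio_le_nn_integral) auto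
  also have "\<dots> = (\<integral>\<^sup>+t. (\<Sum>j\<in>{1..<k}. g j t) \<partial>lborel)"
    unfolding g_def using j_facts
    by (intro nn_integral_sum[symmetric] borel_measurable_h1_div_Om_h1) auto
  also have "\<dots> \<le> (\<integral>\<^sup>+t. ennreal (h1 t / Om h1 (ereal (\<sigma> t)) (ereal t)) * indicator (eivl (s 1) (s k)) t \<partial>lborel)"
    unfolding g_def using AE_sum_h1_div_Om_h1_le[OF chain \<sigma>] by (rule nn_integral_mono_AE)
  finally show ?thesis
    by (simp add: mult.commute)
qed

lemma sum_ln_Om_h1_ratios_ge:
  assumes chain: "ereal a \<le> s 0" "\<forall>j<k. s j < s (Suc j)" "s k \<le> b"
    and "1 \<le> k" "0 < c" "0 < r"
    and det: "\<forall>j\<in>{1..k}. c / r\<^sup>2 \<le> detOm h1 h2 h3 (s (j - 1)) (s j)"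
  shows "real k * ln 2 - (ln r + ln (trOm h1 h2 (s 0) (s k) / sqrt c))
    \<le> (\<Sum>j\<in>{1..<k}. ln (Om h1 (s (j - 1)) (s (Suc j)) / Om h1 (s (j - 1)) (s j)))"
proof -
  define A where "A j = Om h1 (s (j - 1)) (s j)" for j
  define B where "B = Om h2 (s (k - 1)) (s k)"
  note s_range = Suc_chain_range[OF chain]
  have s_le: "s i \<le> s j" if "i \<le> j" "j \<le> k" for i j
    using Suc_chain_le[OF chain(2) that] .
  have "0 < c / r\<^sup>2"
    using \<open>0 < c\<close> \<open>0 < r\<close> by simp
  have A_pos: "0 < A j" if "j \<in> {1..k}" for j
  proof -
    have "0 < detOm h1 h2 h3 (s (j - 1)) (s j)"
      using det that \<open>0 < c / r\<^sup>2\<close> by (meson less_le_trans)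
    moreover have "j - 1 \<le> k" "j \<le> k"
      using that by auto
    ultimately show ?thesis
      unfolding A_def by (intro Om_h1_pos_if_detOm_pos s_range)
  qed
  have "Om h1 (s (j - 1)) (s (Suc j)) = A j + A (Suc j)" if "j \<in> {1..<k}" for j
  proof -
    have "j - 1 \<le> k" "j - 1 \<le> j" "j \<le> Suc j" "Suc j \<le> k"
      using that by auto
    then have "Om h1 (s (j - 1)) (s (Suc j)) = Om h1 (s (j - 1)) (s j) + Om h1 (s j) (s (Suc j))"
      by (intro Om_add s_range s_le) auto
    then show ?thesis
      unfolding A_def by simp
  qed
  then have "(\<Sum>j\<in>{1..<k}. ln (Om h1 (s (j - 1)) (s (Suc j)) / Om h1 (s (j - 1)) (s j)))
      = (\<Sum>j\<in>{1..<k}. ln ((A j + A (Suc j)) / A j))"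
    unfolding A_def[symmetric] by (intro sum.cong) simp_all
  moreover have "(real k - 1) * ln 2 + (ln (A k) - ln (A 1)) / 2 \<le> (\<Sum>j\<in>{1..<k}. ln ((A j + A (Suc j)) / A j))"
    using sum_ln_ratio_ge[OF \<open>1 \<le> k\<close> A_pos] by simp
  moreover have "ln 2 + (ln (A 1) - ln (A k)) / 2 \<le> ln r + ln (trOm h1 h2 (s 0) (s k) / sqrt c)"
  proof (rule ln_trace_ge)
    show "0 < A 1" "0 < A k"
      using A_pos \<open>1 \<le> k\<close> by simp_all
    have "c / r\<^sup>2 \<le> detOm h1 h2 h3 (s (k - 1)) (s k)"
      using det \<open>1 \<le> k\<close> by simp
    also have "\<dots> \<le> A k * B"
      by (simp add: detOm_def A_def B_def)
    finally show "c / r\<^sup>2 \<le> A k * B" .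
    have "A 1 \<le> Om h1 (s 0) (s k)"
      using Om_mono[OF chain(1) order_refl s_le[of 0 1] s_le[of 1 k] chain(3)] \<open>1 \<le> k\<close>
      by (simp add: A_def)
    moreover have "B \<le> Om h2 (s 0) (s k)"
      using Om_mono[OF chain(1) s_le[of 0 "k - 1"] s_le[of "k - 1" k] order_refl chain(3)]
      by (simp add: B_def)
    ultimately show "A 1 + B \<le> trOm h1 h2 (s 0) (s k)"
      by (simp add: trOm_def)
  qed (use \<open>0 < r\<close> \<open>0 < c\<close> in simp_all)
  moreover have "real k * ln 2 = (real k - 1) * ln 2 + ln 2"
    by (simp add: algebra_simps)
  moreover have "(ln (A 1) - ln (A k)) / 2 = - ((ln (A k) - ln (A 1)) / 2)"
    by (simp add: diff_divide_distrib)
  ultimately show ?thesis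
    by linarith
qed

lemma compatible_pair_shat_between:
  assumes cp: "compatible_pair a b h1 h2 h3 r0 c c that shat" "r0 < r" "0 < c" "0 < r"
    and chain: "ereal a \<le> s 0" "\<forall>j<k. s j < s (Suc j)" "s k \<le> b"
    and det: "\<forall>j\<in>{1..k}. c / r\<^sup>2 \<le> detOm h1 h2 h3 (s (j - 1)) (s j)"
    and j: "j \<in> {1..<k}" and t: "t \<in> eivl (s j) (s (Suc j))"
  shows "s (j - 1) \<le> ereal (shat t r) \<and> shat t r \<le> t \<and> 0 < Om h1 (ereal (shat t r)) (ereal t)"
proof -
  note s_range = Suc_chain_range[OF chain]
  have s_le: "s i \<le> s j" if "i \<le> j" "j \<le> k" for i j
    using Suc_chain_le[OF chain(2) that] .
  have "0 < c / r\<^sup>2"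
    using cp(3,4) by simp
  have det_pos: "0 < detOm h1 h2 h3 (s (i - 1)) (s i)" and det_ge: "c / r\<^sup>2 \<le> detOm h1 h2 h3 (s (i - 1)) (s i)"
    if "i \<in> {1..k}" for i
    using det that \<open>0 < c / r\<^sup>2\<close> by (auto intro: less_le_trans)
  have "ereal (that r) < b" and that_det: "detOm h1 h2 h3 (ereal a) (ereal (that r)) = c / r\<^sup>2"
    using cp(1,2) by (auto simp: compatible_pair_def)
  have "ereal (that r) \<le> s 1"
  proof (rule detOm_level_right[OF order_refl chain(1) s_le[of 0 1] s_range(2)[of 1]])
    show "0 < detOm h1 h2 h3 (s 0) (s 1)"
      using det_pos[of 1] j by simp
    show "detOm h1 h2 h3 (ereal a) (ereal (that r)) \<le> detOm h1 h2 h3 (s 0) (s 1)"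
      using det_ge[of 1] j that_det by simp
  qed (use j \<open>ereal (that r) < b\<close> in simp_all)
  moreover have "s 1 \<le> s j" "s j < ereal t" "ereal t < s (Suc j)" "s (Suc j) \<le> b"
    using j t s_le[of 1 j] s_range(2)[of "Suc j"] by (auto simp: eivl_def)
  ultimately have "that r \<le> t" "ereal t < b"
    using order_trans less_le_trans by (metis ereal_less_eq(3) less_imp_le)+
  then have shat: "a \<le> shat t r" "shat t r \<le> t" "detOm h1 h2 h3 (ereal (shat t r)) (ereal t) = c / r\<^sup>2"
    using cp(1,2) by (auto simp: compatible_pair_def)
  have "s (j - 1) \<le> ereal (shat t r)"
  proof (rule detOm_level_left[OF _ s_range(1)[of "j - 1"] s_le[of "j - 1" j]])
    show "0 < detOm h1 h2 h3 (s (j - 1)) (s j)"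
      using det_pos j by simp
    show "detOm h1 h2 h3 (ereal (shat t r)) (ereal t) \<le> detOm h1 h2 h3 (s (j - 1)) (s j)"
      using det_ge j shat(3) by simp
  qed (use j shat \<open>s j < ereal t\<close> \<open>ereal t < b\<close> in auto)
  moreover have "0 < Om h1 (ereal (shat t r)) (ereal t)"
    using Om_h1_pos_if_detOm_pos[of "ereal (shat t r)" "ereal t"] shat \<open>0 < c / r\<^sup>2\<close> \<open>ereal t < b\<close>
    by simp
  ultimately show ?thesis
    using shat by simp
qed

end

theorem lemma5p7:
  fixes a :: real and b :: ereal and h1 h2 h3 :: "real \<Rightarrow> real"
    and c r :: real and that :: "real \<Rightarrow> real" and shat :: "real \<Rightarrow> real \<Rightarrow> real"
    and k :: nat and s :: "nat \<Rightarrow> ereal"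
  assumes "hamiltonian a b h1 h2 h3"
    and "limit_circle a b h1 h2"
    and "definite a b h1 h2 h3"
    and "c > 0"
    and "compatible_pair a b h1 h2 h3 (sqrt (c / detOm h1 h2 h3 (ereal a) b)) c c that shat"
    and "r > sqrt (c / detOm h1 h2 h3 (ereal a) b)"
    and "k \<ge> 1"
    and "ereal a \<le> s 0"
    and "\<forall>j<k. s j < s (Suc j)"
    and "s k \<le> b"
    and "\<forall>j\<in>{1..k}. detOm h1 h2 h3 (s (j - 1)) (s j) \<ge> c / r^2"
  shows "(\<integral>\<^sup>+ t \<in> eivl (s 1) (s k). ennreal (h1 t / Om h1 (ereal (shat t r)) (ereal t)) \<partial>lborel)
           \<ge> ennreal (real k * ln 2 - (ln r + ln (trOm h1 h2 (s 0) (s k) / sqrt c)))"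
proof -
  interpret limit_circle_hamiltonian a b h1 h2 h3
    using assms(1,2) by (rule limit_circle_hamiltonianI)
  have "0 \<le> sqrt (c / detOm h1 h2 h3 (ereal a) b)"
    using assms(4) detOm_nonneg[OF order_refl order_refl] by simp
  then have "0 < r"
    using assms(6) by linarith
  have pos: "0 < Om h1 (s (j - 1)) (s j)" if "j \<in> {1..<k}" for j
  proof (rule Om_h1_pos_if_detOm_pos)
    show "ereal a \<le> s (j - 1)" "s j \<le> b"
      using that by (auto intro: Suc_chain_range[OF assms(8-10)])
    have "0 < c / r\<^sup>2"
      using assms(4) \<open>0 < r\<close> by simp
    then show "0 < detOm h1 h2 h3 (s (j - 1)) (s j)"
      using assms(11) that by (auto intro: less_le_trans)
  qed
  have "ennreal (real k * ln 2 - (ln r + ln (trOm h1 h2 (s 0) (s k) / sqrt c)))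
      \<le> ennreal (\<Sum>j\<in>{1..<k}. ln (Om h1 (s (j - 1)) (s (Suc j)) / Om h1 (s (j - 1)) (s j)))"
    using sum_ln_Om_h1_ratios_ge[OF assms(8-10,7,4) \<open>0 < r\<close> assms(11)] by (rule ennreal_leI)
  also have "\<dots> \<le> (\<integral>\<^sup>+ t \<in> eivl (s 1) (s k). ennreal (h1 t / Om h1 (ereal (shat t r)) (ereal t)) \<partial>lborel)"
    using compatible_pair_shat_between[OF assms(5,6,4) \<open>0 < r\<close> assms(8-11)]
    by (intro sum_ln_Om_h1_ratios_le_nn_integral[OF assms(8-10) pos]) blast+
  finally show ?thesis .
qed

end
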